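(* Fix $W>0$, $N_0>0$, dual variables $\mu\ge0$, $\lambda\ge0$, and complex numbers $H_{\rm SD},H_{\rm SR},H_{\rm RD}$. Consider the problem $$\max_{P\ge0,\ \bar\Xi\ge0}\ \frac{1}{2W}\log_2\left(1+\frac{\left(|H_{\rm SD}|+|H_{\rm RD}H_{\rm SR}|\bar\Xi\right)^2P}{\left(|H_{\rm RD}|^2\bar\Xi^2+1\right)N_0}\right)-\mu P-\lambda\bar\Xi^2|H_{\rm SR}|^2P.$$ Define $$\beta(\bar\Xi)=\frac{\left(|H_{\rm SD}|+|H_{\rm RD}H_{\rm SR}|\bar\Xi\right)^2}{\left(\mu+\lambda\bar\Xi^2|H_{\rm SR}|^2\right)\left(|H_{\rm RD}|^2\bar\Xi^2+1\right)N_0},$$ $$\chi(\bar\Xi)=\left(\frac{1}{(2\ln2)W(\mu+\lambda\bar\Xi^2|H_{\rm SR}|^2)}-\frac{\left(|H_{\rm RD}|^2\bar\Xi^2+1\right)N_0}{\left(|H_{\rm SD}|+|H_{\rm RD}H_{\rm SR}|\bar\Xi\right)^2}\right)^+,$$ where $x^+=\max(x,0)$. Then an optimal solution $(P^\star,\bar\Xi^\star)$ of the problem is given by $$\bar\Xi^\star=\begin{cases}\arg\max_{\bar\Xi\ge0}\beta(\bar\Xi), & \text{if } \max_{\bar\Xi\ge0}\beta(\bar\Xi)>(2\ln2)W,\\ 0, & \text{otherwise},\end{cases}\qquad P^\star=\chi(\bar\Xi^\star).$$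
   Context: This is the per-frequency subproblem arising from the Lagrangian of the rate maximization for a full-duplex filter-and-forward relay channel, where $P$ is the source power spectral density at a given frequency, $\bar\Xi$ is the amplitude of the relay's effective filter gain at that frequency, $H_{\rm SD},H_{\rm SR},H_{\rm RD}$ are the source–destination, source–relay and relay–destination channel frequency responses at that frequency, and $\mu,\lambda$ are the Lagrange multipliers of the source and relay power constraints. *)

theory Defs
  imports Complex_Main
begin

text \<open>Per-frequency Lagrangian objective (P = source PSD, X = relay filter amplitude).\<close>
definition objective :: "real \<Rightarrow> real \<Rightarrow> real \<Rightarrow> real \<Rightarrow> complex \<Rightarrow> complex \<Rightarrow> complex \<Rightarrow> real \<Rightarrow> real \<Rightarrow> real" where
  "objective W N0 mu lambda HSD HSR HRD P X =
     1 / (2 * W) * log 2 (1 + (cmod HSD + cmod (HRD * HSR) * X)^2 * P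
                               / ((cmod HRD ^ 2 * X^2 + 1) * N0))
     - mu * P - lambda * X^2 * cmod HSR ^ 2 * P"

definition beta_fn :: "real \<Rightarrow> real \<Rightarrow> real \<Rightarrow> complex \<Rightarrow> complex \<Rightarrow> complex \<Rightarrow> real \<Rightarrow> real" where
  "beta_fn N0 mu lambda HSD HSR HRD X =
     (cmod HSD + cmod (HRD * HSR) * X)^2
     / ((mu + lambda * X^2 * cmod HSR ^ 2) * (cmod HRD ^ 2 * X^2 + 1) * N0)"

text \<open>The positive part; when the channel gain term vanishes, the subtracted term
  N0-fraction is +infinity, so the positive part is 0 (convention made explicit).\<close>
definition chi_fn :: "real \<Rightarrow> real \<Rightarrow> real \<Rightarrow> real \<Rightarrow> complex \<Rightarrow> complex \<Rightarrow> complex \<Rightarrow> real \<Rightarrow> real" where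
  "chi_fn W N0 mu lambda HSD HSR HRD X =
     (if cmod HSD + cmod (HRD * HSR) * X = 0 then 0
      else max (1 / ((2 * ln 2) * W * (mu + lambda * X^2 * cmod HSR ^ 2))
                - (cmod HRD ^ 2 * X^2 + 1) * N0 / (cmod HSD + cmod (HRD * HSR) * X)^2) 0)"

definition is_optimal :: "real \<Rightarrow> real \<Rightarrow> real \<Rightarrow> real \<Rightarrow> complex \<Rightarrow> complex \<Rightarrow> complex \<Rightarrow> real \<Rightarrow> real \<Rightarrow> bool" where
  "is_optimal W N0 mu lambda HSD HSR HRD Ps Xs \<longleftrightarrow>
     Ps \<ge> 0 \<and> Xs \<ge> 0 \<and>
     (\<forall>P X. P \<ge> 0 \<longrightarrow> X \<ge> 0 \<longrightarrow>
        objective W N0 mu lambda HSD HSR HRD P X \<le> objective W N0 mu lambda HSD HSR HRD Ps Xs)"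

end

theory Submission
  imports Defs
begin

text \<open>For a fixed relay amplitude the objective is the single-channel water-filling
  problem ln (1 + g P) / \<kappa> - c P with \<kappa> = 2 ln 2 W, gain g and price c. By
  ln x \<le> x - 1, it is bounded by w b = (ln (b/\<kappa>) - 1)/\<kappa> + 1/b for every b \<ge> g/c, b > 0; this
  bound is attained at the water level P = 1/(\<kappa> c) - 1/g when b = g/c, and w \<kappa> = 0 is attained
  at P = 0. Taking b to be the maximum of \<beta> = g/c over the relay amplitude, or \<kappa> when that
  maximum does not exceed \<kappa>, bounds the objective uniformly by its value at the claimed point.\<close>

definition waterfill_value :: "real \<Rightarrow> real \<Rightarrow> real" where
  "waterfill_value \<kappa> b = (ln (b / \<kappa>) - 1) / \<kappa> + 1 / b"

lemma waterfill_value_self [simp]: "\<kappa> \<noteq> 0 \<Longrightarrow> waterfill_value \<kappa> \<kappa> = 0"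
  by (simp add: waterfill_value_def)

lemma ln_rate_minus_cost_le_waterfill_value:
  fixes \<kappa> b c g P :: real
  assumes "\<kappa> > 0" "b > 0" "g \<ge> 0" "P \<ge> 0" "g \<le> b * c"
  shows "ln (1 + g * P) / \<kappa> - c * P \<le> waterfill_value \<kappa> b"
proof -
  define y where "y = 1 + g * P"
  have y: "y > 0" using assms by (simp add: y_def add_pos_nonneg)
  have "ln y = ln (b / \<kappa>) + ln (y * \<kappa> / b)"
    using y assms by (simp add: ln_div ln_mult)
  also have "ln (y * \<kappa> / b) \<le> y * \<kappa> / b - 1"
    using y assms by (intro ln_le_minus_one) simp
  finally have "ln y / \<kappa> \<le> (ln (b / \<kappa>) + y * \<kappa> / b - 1) / \<kappa>"
    using assms by (simp add: divide_right_mono)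
  also have "\<dots> = waterfill_value \<kappa> b + g * P / b"
    using assms by (simp add: y_def waterfill_value_def field_simps)
  also have "g * P / b \<le> c * P"
    using assms by (simp add: divide_le_eq mult.commute mult.left_commute mult_left_mono)
  finally show ?thesis by (simp add: y_def)
qed

lemma ln_rate_minus_cost_at_water_level:
  fixes \<kappa> c g :: real
  assumes "\<kappa> \<noteq> 0" "c \<noteq> 0" "g \<noteq> 0"
  shows "ln (1 + g * (1 / (\<kappa> * c) - 1 / g)) / \<kappa> - c * (1 / (\<kappa> * c) - 1 / g)
         = waterfill_value \<kappa> (g / c)"
proof -
  have "1 + g * (1 / (\<kappa> * c) - 1 / g) = g / c / \<kappa>"
    using assms by (simp add: field_simps)
  moreover have "c * (1 / (\<kappa> * c) - 1 / g) = 1 / \<kappa> - 1 / (g / c)"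
    using assms by (simp add: field_simps)
  ultimately show ?thesis by (simp add: waterfill_value_def diff_divide_distrib)
qed

lemma water_level_pos_iff:
  fixes \<kappa> c g :: real
  assumes "\<kappa> > 0" "c > 0" "g > 0"
  shows "1 / (\<kappa> * c) - 1 / g > 0 \<longleftrightarrow> g / c > \<kappa>"
  using assms by (simp add: field_simps)

locale relay_frequency =
  fixes W N0 mu lambda :: real and HSD HSR HRD :: complex
  assumes W_pos: "W > 0" and N0_pos: "N0 > 0"
    and mu_nonneg: "mu \<ge> 0" and lambda_nonneg: "lambda \<ge> 0"
    and cost_nonzero: "\<forall>X\<ge>0. mu + lambda * X^2 * cmod HSR ^ 2 \<noteq> 0"
begin

abbreviation "obj \<equiv> objective W N0 mu lambda HSD HSR HRD"
abbreviation "\<beta> \<equiv> beta_fn N0 mu lambda HSD HSR HRD"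
abbreviation "\<chi> \<equiv> chi_fn W N0 mu lambda HSD HSR HRD"
abbreviation "optimal \<equiv> is_optimal W N0 mu lambda HSD HSR HRD"

definition \<kappa> :: real where "\<kappa> = 2 * ln 2 * W"

definition cost :: "real \<Rightarrow> real" where
  "cost X = mu + lambda * X^2 * cmod HSR ^ 2"

definition gain :: "real \<Rightarrow> real" where
  "gain X = (cmod HSD + cmod (HRD * HSR) * X)^2 / ((cmod HRD ^ 2 * X^2 + 1) * N0)"

lemma \<kappa>_pos: "\<kappa> > 0"
  using W_pos by (simp add: \<kappa>_def)

lemma cost_pos: "X \<ge> 0 \<Longrightarrow> cost X > 0"
  using mu_nonneg lambda_nonneg cost_nonzero
  by (auto simp: cost_def order_less_le intro!: add_nonneg_nonneg)

lemma noise_factor_pos: "cmod HRD ^ 2 * X^2 + 1 > 0"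
  by (simp add: add_nonneg_pos)

lemma gain_nonneg: "gain X \<ge> 0"
  using noise_factor_pos[of X] N0_pos by (simp add: gain_def)

lemma objective_eq: "obj P X = ln (1 + gain X * P) / \<kappa> - cost X * P"
  by (simp add: objective_def gain_def cost_def \<kappa>_def log_def algebra_simps)

lemma beta_eq: "\<beta> X = gain X / cost X"
  by (simp add: beta_fn_def gain_def cost_def field_simps)

lemma chi_eq: "\<chi> X = (if gain X = 0 then 0 else max (1 / (\<kappa> * cost X) - 1 / gain X) 0)"
  using noise_factor_pos[of X] N0_pos by (simp add: chi_fn_def gain_def cost_def \<kappa>_def)

lemma objective_le_waterfill_value:
  assumes "P \<ge> 0" "X \<ge> 0" "b > 0" "\<beta> X \<le> b"
  shows "obj P X \<le> waterfill_value \<kappa> b"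
  unfolding objective_eq
proof (rule ln_rate_minus_cost_le_waterfill_value[OF \<kappa>_pos \<open>b > 0\<close> gain_nonneg \<open>P \<ge> 0\<close>])
  show "gain X \<le> b * cost X"
    using assms(4) cost_pos[OF \<open>X \<ge> 0\<close>] by (simp add: beta_eq divide_le_eq)
qed

lemma optimal_at_beta_max:
  assumes Xs: "Xs \<ge> 0" and max: "\<forall>X\<ge>0. \<beta> X \<le> \<beta> Xs" and above: "\<beta> Xs > 2 * ln 2 * W"
  shows "optimal (\<chi> Xs) Xs"
proof -
  have cost: "cost Xs > 0" using cost_pos[OF Xs] .
  have above': "gain Xs / cost Xs > \<kappa>" using above by (simp add: beta_eq \<kappa>_def)
  then have gain: "gain Xs > 0"
    using \<kappa>_pos gain_nonneg[of Xs] by (cases "gain Xs = 0") auto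
  have level: "1 / (\<kappa> * cost Xs) - 1 / gain Xs > 0"
    using water_level_pos_iff[OF \<kappa>_pos cost gain] above' by blast
  then have chi: "\<chi> Xs = 1 / (\<kappa> * cost Xs) - 1 / gain Xs"
    using gain by (simp add: chi_eq)
  have attained: "obj (\<chi> Xs) Xs = waterfill_value \<kappa> (\<beta> Xs)"
    unfolding chi objective_eq beta_eq
    using ln_rate_minus_cost_at_water_level \<kappa>_pos cost gain by simp
  have "obj P X \<le> obj (\<chi> Xs) Xs" if "P \<ge> 0" "X \<ge> 0" for P X
    unfolding attained
    using objective_le_waterfill_value[OF that] max that(2) above' \<kappa>_pos
    by (simp add: beta_eq)
  then show ?thesis
    using Xs level chi by (simp add: is_optimal_def)
qed

lemma optimal_at_zero:
  assumes below: "\<forall>X\<ge>0. \<beta> X \<le> 2 * ln 2 * W"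
  shows "optimal (\<chi> 0) 0"
proof -
  have below': "\<beta> X \<le> \<kappa>" if "X \<ge> 0" for X
    using below that by (simp add: \<kappa>_def)
  have "\<chi> 0 = 0"
  proof (cases "gain 0 = 0")
    case False
    then have "gain 0 > 0" using gain_nonneg[of 0] by simp
    then have "\<not> 1 / (\<kappa> * cost 0) - 1 / gain 0 > 0"
      using water_level_pos_iff[OF \<kappa>_pos cost_pos] below'[of 0] by (simp add: beta_eq)
    then show ?thesis by (simp add: chi_eq)
  qed (simp add: chi_eq)
  moreover have "obj P X \<le> obj 0 0" if "P \<ge> 0" "X \<ge> 0" for P X
    using objective_le_waterfill_value[OF that \<kappa>_pos below'[OF that(2)]] \<kappa>_pos
    by (simp add: objective_eq)
  ultimately show ?thesis by (simp add: is_optimal_def)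
qed

end

theorem mainTheorem4:
  fixes W N0 mu lambda :: real and HSD HSR HRD :: complex
  assumes "W > 0" and "N0 > 0" and "mu \<ge> 0" and "lambda \<ge> 0"
    and beta_well_defined: "\<forall>X\<ge>0. mu + lambda * X^2 * cmod HSR ^ 2 \<noteq> 0"
  shows
    "(\<forall>Xs. Xs \<ge> 0
        \<longrightarrow> (\<forall>X\<ge>0. beta_fn N0 mu lambda HSD HSR HRD X \<le> beta_fn N0 mu lambda HSD HSR HRD Xs)
        \<longrightarrow> beta_fn N0 mu lambda HSD HSR HRD Xs > (2 * ln 2) * W
        \<longrightarrow> is_optimal W N0 mu lambda HSD HSR HRD (chi_fn W N0 mu lambda HSD HSR HRD Xs) Xs)
     \<and>
     ((\<forall>X\<ge>0. beta_fn N0 mu lambda HSD HSR HRD X \<le> (2 * ln 2) * W)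
        \<longrightarrow> is_optimal W N0 mu lambda HSD HSR HRD (chi_fn W N0 mu lambda HSD HSR HRD 0) 0)"
proof -
  interpret relay_frequency W N0 mu lambda HSD HSR HRD
    using assms by unfold_locales
  show ?thesis
    using optimal_at_beta_max optimal_at_zero by blast
qed

end
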